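(* Let $g:\Omega\to[0,1]$ be measurable with $\mathbb E[g]<1$, $g_{\omega,n}=\prod_{j=0}^{n-1}g(\theta^j\omega)$, and $\beta_1(r)=\|g-\mathbb E[g|\mathcal F_r]\|_{L^1(\Omega,\mathcal F,\mathbb P)}$. Suppose that $$\limsup_{k\to\infty}\psi_U(k)<\frac{1}{\mathbb E[g]}-1$$ and $\beta_1(r)\le Cr^{-A}$ for some $C>0$ and $A>1$. Then for every $\varepsilon\in(0,1)$ there is a constant $C_\varepsilon>0$ such that $\mathbb E[g_{\omega,n}]\le C_\varepsilon n^{1-\varepsilon A}$ for all $n\in\mathbb N$.
   Context: $(X_k)_{k\in\mathbb Z}$ is a stationary sequence with values in a measurable space $\Omega_0$ and $(\Omega,\mathcal F,\mathbb P,\theta)$ is its shift system ($\Omega=\Omega_0^{\mathbb Z}$, $\theta$ the left shift, $\mathbb P$ the law of the sequence). $\mathcal F_r$ is the $\sigma$-algebra generated by the coordinates $\omega_j$, $|j|\le r$. $\psi_U(m)$ is the smallest number such that $\mathbb P(A\cap B)-\mathbb P(A)\mathbb P(B)\le\mathbb P(A)\mathbb P(B)\psi_U(m)$ for all $k\in\mathbb N$, $A\in\sigma\{X_0,\dots,X_k\}$, $B\in\sigma\{X_{k+m},X_{k+m+1},\dots\}$. *)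

theory Defs
  imports "HOL-Probability.Probability"
begin

definition shift :: "(int \<Rightarrow> 'a) \<Rightarrow> (int \<Rightarrow> 'a)" where
  "shift \<omega> = (\<lambda>j. \<omega> (j + 1))"

definition coord_sets :: "(int \<Rightarrow> 'a) measure \<Rightarrow> 'a measure \<Rightarrow> int set \<Rightarrow> (int \<Rightarrow> 'a) set set" where
  "coord_sets P M0 J = sigma_sets (space P)
     (\<Union>j\<in>J. {{\<omega>\<in>space P. \<omega> j \<in> S} | S. S \<in> sets M0})"

definition Fr :: "(int \<Rightarrow> 'a) measure \<Rightarrow> 'a measure \<Rightarrow> nat \<Rightarrow> (int \<Rightarrow> 'a) measure" where
  "Fr P M0 r = sigma (space P) (\<Union>j\<in>{- int r..int r}. {{\<omega>\<in>space P. \<omega> j \<in> S} | S. S \<in> sets M0})"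

text \<open>psi_U(m): the smallest (extended real) constant c with
  P(A \<inter> B) - P(A)P(B) \<le> P(A)P(B) c for all k, A \<in> \<sigma>{X_0..X_k}, B \<in> \<sigma>{X_(k+m),...};
  infinity if no finite constant works.\<close>
definition psiU :: "(int \<Rightarrow> 'a) measure \<Rightarrow> 'a measure \<Rightarrow> nat \<Rightarrow> ereal" where
  "psiU P M0 m = Inf {c::ereal. \<forall>k::nat. \<forall>A \<in> coord_sets P M0 {0..int k}.
       \<forall>B \<in> coord_sets P M0 {int k + int m..}.
       ereal (measure P (A \<inter> B) - measure P A * measure P B)
         \<le> ereal (measure P A * measure P B) * c}"

definition beta1 :: "(int \<Rightarrow> 'a) measure \<Rightarrow> 'a measure \<Rightarrow> ((int \<Rightarrow> 'a) \<Rightarrow> real) \<Rightarrow> nat \<Rightarrow> real" where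
  "beta1 P M0 g r = (\<integral>\<omega>. \<bar>g \<omega> - real_cond_exp P (Fr P M0 r) g \<omega>\<bar> \<partial>P)"

definition gprod :: "((int \<Rightarrow> 'a) \<Rightarrow> real) \<Rightarrow> nat \<Rightarrow> (int \<Rightarrow> 'a) \<Rightarrow> real" where
  "gprod g n \<omega> = (\<Prod>j<n. g ((shift ^^ j) \<omega>))"

end

theory Submission
  imports Defs
begin

text \<open>Let \<open>h\<close> be the conditional expectation of \<open>g\<close> given the coordinates in \<open>[-r, r]\<close>, clipped
  to \<open>[0, 1]\<close>: it has the mean of \<open>g\<close> and is \<open>\<beta>\<^sub>1(r)\<close>-close to \<open>g\<close> in \<open>L\<^sup>1\<close>. As all factors lie in
  \<open>[0, 1]\<close>, dropping factors only increases \<open>g\<^sub>\<omega>\<^sub>,\<^sub>n\<close>, so we keep the \<open>K \<approx> n / L\<close> factors at the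
  positions \<open>i L\<close>, \<open>L = 2 r + m\<close>. Shifted by \<open>r\<close> and with \<open>g\<close> replaced by \<open>h\<close> (at a cost of
  \<open>K \<beta>\<^sub>1(r)\<close>), these factors depend on windows of coordinates that are \<open>m\<close> apart, and
  \<open>\<psi>\<^sub>U(m) < c\<close> bounds the expectation of their product by \<open>((1 + c) E[g]) ^ K\<close>; the hypothesis on
  \<open>limsup \<psi>\<^sub>U\<close> is what allows \<open>(1 + c) E[g] < 1\<close>. With \<open>r \<approx> n powr \<epsilon>\<close> we get
  \<open>K \<ge> n powr (1 - \<epsilon>) / (m + 4)\<close>, so the geometric term decays faster than any power of \<open>n\<close>,
  while \<open>K \<beta>\<^sub>1(r) \<le> n C n powr (- \<epsilon> A)\<close>.\<close>

lemma nn_integral_mult_le_of_indicator: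
  fixes K :: ennreal
  assumes F: "subalgebra P F" and h: "h \<in> borel_measurable P"
    and indicator_le: "\<And>A. A \<in> sets F \<Longrightarrow>
      (\<integral>\<^sup>+x. indicator A x * h x \<partial>P) \<le> K * emeasure P A * (\<integral>\<^sup>+x. h x \<partial>P)"
    and f: "f \<in> borel_measurable F"
  shows "(\<integral>\<^sup>+x. f x * h x \<partial>P) \<le> K * (\<integral>\<^sup>+x. f x \<partial>P) * (\<integral>\<^sup>+x. h x \<partial>P)"
  using f
proof (induction rule: borel_measurable_induct)
  case (cong f f')
  have "space F = space P" using F by (simp add: subalgebra_def)
  then have "(\<integral>\<^sup>+x. f x * h x \<partial>P) = (\<integral>\<^sup>+x. f' x * h x \<partial>P)" "(\<integral>\<^sup>+x. f x \<partial>P) = (\<integral>\<^sup>+x. f' x \<partial>P)"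
    using cong by (auto intro!: nn_integral_cong)
  then show ?case using cong by simp
next
  case (set A)
  then have "A \<in> sets P" using F by (auto simp: subalgebra_def)
  then show ?case using indicator_le[OF set] by simp
next
  case (mult u c)
  have u: "u \<in> borel_measurable P" using mult F measurable_from_subalg by blast
  have "(\<integral>\<^sup>+x. c * u x * h x \<partial>P) = c * (\<integral>\<^sup>+x. u x * h x \<partial>P)"
    using u h by (subst nn_integral_cmult[symmetric]) (auto simp: ac_simps)
  also have "\<dots> \<le> c * (K * (\<integral>\<^sup>+x. u x \<partial>P) * (\<integral>\<^sup>+x. h x \<partial>P))"
    by (rule mult_left_mono[OF mult.IH]) simp
  also have "\<dots> = K * (\<integral>\<^sup>+x. c * u x \<partial>P) * (\<integral>\<^sup>+x. h x \<partial>P)"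
    using u by (simp add: nn_integral_cmult ac_simps)
  finally show ?case .
next
  case (add u v)
  have uv: "u \<in> borel_measurable P" "v \<in> borel_measurable P"
    using add F measurable_from_subalg by blast+
  have "(\<integral>\<^sup>+x. (v x + u x) * h x \<partial>P) = (\<integral>\<^sup>+x. v x * h x \<partial>P) + (\<integral>\<^sup>+x. u x * h x \<partial>P)"
    using uv h by (subst nn_integral_add[symmetric]) (auto simp: distrib_right)
  also have "\<dots> \<le> K * (\<integral>\<^sup>+x. v x \<partial>P) * (\<integral>\<^sup>+x. h x \<partial>P) + K * (\<integral>\<^sup>+x. u x \<partial>P) * (\<integral>\<^sup>+x. h x \<partial>P)"
    by (rule add_mono[OF add.IH(2) add.IH(1)])
  also have "\<dots> = K * (\<integral>\<^sup>+x. v x + u x \<partial>P) * (\<integral>\<^sup>+x. h x \<partial>P)"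
    using uv by (simp add: nn_integral_add ring_distribs)
  finally show ?case .
next
  case (seq U)
  have U: "\<And>i. U i \<in> borel_measurable P" using seq F measurable_from_subalg by blast
  have "(\<integral>\<^sup>+x. (SUP i. U i) x * h x \<partial>P) = (\<integral>\<^sup>+x. (SUP i. U i x * h x) \<partial>P)"
    by (simp only: SUP_apply SUP_mult_right_ennreal)
  also have "\<dots> = (SUP i. \<integral>\<^sup>+x. U i x * h x \<partial>P)"
    using seq U h by (intro nn_integral_monotone_convergence_SUP)
      (auto simp: incseq_def le_fun_def intro!: mult_right_mono)
  also have "\<dots> \<le> (SUP i. K * (\<integral>\<^sup>+x. U i x \<partial>P) * (\<integral>\<^sup>+x. h x \<partial>P))"
    using seq by (intro SUP_mono) blast
  also have "\<dots> = K * (SUP i. \<integral>\<^sup>+x. U i x \<partial>P) * (\<integral>\<^sup>+x. h x \<partial>P)"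
    by (simp only: SUP_mult_left_ennreal SUP_mult_right_ennreal)
  also have "\<dots> = K * (\<integral>\<^sup>+x. (SUP i. U i x) \<partial>P) * (\<integral>\<^sup>+x. h x \<partial>P)"
    using seq U by (subst nn_integral_monotone_convergence_SUP) (auto simp: incseq_def le_fun_def)
  finally show ?case by (simp only: SUP_apply)
qed

lemma nn_integral_mult_le_of_mixing:
  fixes K :: ennreal
  assumes F1: "subalgebra P F1" and F2: "subalgebra P F2"
    and mixing: "\<And>A B. A \<in> sets F1 \<Longrightarrow> B \<in> sets F2 \<Longrightarrow>
      emeasure P (A \<inter> B) \<le> K * emeasure P A * emeasure P B"
    and f: "f \<in> borel_measurable F1" and h: "h \<in> borel_measurable F2"
  shows "(\<integral>\<^sup>+x. f x * h x \<partial>P) \<le> K * (\<integral>\<^sup>+x. f x \<partial>P) * (\<integral>\<^sup>+x. h x \<partial>P)"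
proof (rule nn_integral_mult_le_of_indicator[OF F1 _ _ f])
  show "h \<in> borel_measurable P" using h F2 measurable_from_subalg by blast
  fix A assume A: "A \<in> sets F1"
  then have A_P: "A \<in> sets P" using F1 by (auto simp: subalgebra_def)
  have "(\<integral>\<^sup>+x. h x * indicator A x \<partial>P) \<le> K * (\<integral>\<^sup>+x. h x \<partial>P) * (\<integral>\<^sup>+x. indicator A x \<partial>P)"
  proof (rule nn_integral_mult_le_of_indicator[OF F2 _ _ h])
    fix B assume B: "B \<in> sets F2"
    then have "B \<in> sets P" using F2 by (auto simp: subalgebra_def)
    then show "(\<integral>\<^sup>+x. indicator B x * indicator A x \<partial>P)
        \<le> K * emeasure P B * (\<integral>\<^sup>+x. indicator A x \<partial>P)"
      using mixing[OF A B] A_P by (simp add: indicator_inter_arith[symmetric] Int_commute ac_simps)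
  qed (use A_P in simp)
  then show "(\<integral>\<^sup>+x. indicator A x * h x \<partial>P) \<le> K * emeasure P A * (\<integral>\<^sup>+x. h x \<partial>P)"
    using A_P by (simp add: ac_simps)
qed

lemma (in finite_measure) integral_mult_le_of_mixing:
  assumes F1: "subalgebra M F1" and F2: "subalgebra M F2" and K: "0 \<le> K"
    and mixing: "\<And>A B. A \<in> sets F1 \<Longrightarrow> B \<in> sets F2 \<Longrightarrow>
      measure M (A \<inter> B) \<le> K * measure M A * measure M B"
    and f: "f \<in> borel_measurable F1" and h: "h \<in> borel_measurable F2"
    and f_range: "\<And>x. x \<in> space M \<Longrightarrow> 0 \<le> f x \<and> f x \<le> 1"
    and h_range: "\<And>x. x \<in> space M \<Longrightarrow> 0 \<le> h x \<and> h x \<le> 1"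
  shows "(\<integral>x. f x * h x \<partial>M) \<le> K * (\<integral>x. f x \<partial>M) * (\<integral>x. h x \<partial>M)"
proof -
  have f_M: "f \<in> borel_measurable M" using f F1 measurable_from_subalg by blast
  have h_M: "h \<in> borel_measurable M" using h F2 measurable_from_subalg by blast
  have f_int: "integrable M f" and h_int: "integrable M h"
    using f_M h_M f_range h_range by (auto intro!: integrable_const_bound[where B=1])
  have fh_int: "integrable M (\<lambda>x. f x * h x)"
    using f_M h_M f_range h_range by (intro integrable_const_bound[where B=1]) (auto intro: mult_le_one)
  have "(\<integral>\<^sup>+x. ennreal (f x) * ennreal (h x) \<partial>M)
      \<le> ennreal K * (\<integral>\<^sup>+x. ennreal (f x) \<partial>M) * (\<integral>\<^sup>+x. ennreal (h x) \<partial>M)"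
  proof (rule nn_integral_mult_le_of_mixing[OF F1 F2])
    fix A B assume "A \<in> sets F1" "B \<in> sets F2"
    then show "emeasure M (A \<inter> B) \<le> ennreal K * emeasure M A * emeasure M B"
      using mixing K by (simp add: emeasure_eq_measure ennreal_mult[symmetric] ennreal_leI)
  qed (use f h in auto)
  moreover have "(\<integral>\<^sup>+x. ennreal (f x) * ennreal (h x) \<partial>M) = ennreal (\<integral>x. f x * h x \<partial>M)"
    using f_range h_range fh_int
    by (subst nn_integral_eq_integral[symmetric]) (auto simp: ennreal_mult intro!: nn_integral_cong)
  moreover have "(\<integral>\<^sup>+x. ennreal (f x) \<partial>M) = ennreal (\<integral>x. f x \<partial>M)"
    "(\<integral>\<^sup>+x. ennreal (h x) \<partial>M) = ennreal (\<integral>x. h x \<partial>M)"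
    using f_range h_range f_int h_int by (auto intro!: nn_integral_eq_integral)
  moreover have "0 \<le> (\<integral>x. f x \<partial>M)" "0 \<le> (\<integral>x. h x \<partial>M)"
    using f_range h_range by (auto intro!: integral_nonneg_AE)
  ultimately show ?thesis
    using K by (simp add: ennreal_mult[symmetric] ennreal_le_iff)
qed

lemma (in prob_space) clipped_real_cond_exp:
  assumes F: "subalgebra M F" and g: "g \<in> borel_measurable M"
    and g_range: "\<And>x. x \<in> space M \<Longrightarrow> 0 \<le> g x \<and> g x \<le> 1"
  obtains h where "h \<in> borel_measurable F" "\<And>x. 0 \<le> h x \<and> h x \<le> 1"
    "(\<integral>x. h x \<partial>M) = (\<integral>x. g x \<partial>M)"
    "(\<integral>x. \<bar>g x - h x\<bar> \<partial>M) \<le> (\<integral>x. \<bar>g x - real_cond_exp M F g x\<bar> \<partial>M)"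
proof
  interpret finite_measure_subalgebra M F
    using F by unfold_locales (simp add: subalgebra_def)
  define e where "e = real_cond_exp M F g"
  \<comment> \<open>\<open>e\<close> lies in \<open>[0, 1]\<close> only almost everywhere.\<close>
  define h where "h = (\<lambda>x. max 0 (min 1 (e x)))"
  have g_int: "integrable M g" using g g_range by (intro integrable_const_bound[where B=1]) auto
  have e: "e \<in> borel_measurable F" "e \<in> borel_measurable M" "integrable M e"
    unfolding e_def using real_cond_exp_int(1)[OF g_int] by auto
  have "AE x in M. 0 \<le> e x" "AE x in M. e x \<le> 1"
    unfolding e_def using g_range by (auto intro!: real_cond_exp_ge_c real_cond_exp_le_c g_int)
  then have h_ae: "AE x in M. h x = e x" by (auto simp: h_def)
  show "h \<in> borel_measurable F" using e(1) unfolding h_def by measurable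
  show "\<And>x. 0 \<le> h x \<and> h x \<le> 1" by (auto simp: h_def)
  have h_M: "h \<in> borel_measurable M" using e(2) unfolding h_def by measurable
  have "(\<integral>x. h x \<partial>M) = (\<integral>x. e x \<partial>M)" using h_ae h_M e(2) by (intro integral_cong_AE) auto
  then show "(\<integral>x. h x \<partial>M) = (\<integral>x. g x \<partial>M)" unfolding e_def by (simp add: real_cond_exp_int(2)[OF g_int])
  have h_int: "integrable M h"
    using h_M by (intro integrable_const_bound[where B=1]) (auto simp: h_def)
  have "\<bar>g x - h x\<bar> \<le> \<bar>g x - e x\<bar>" if "x \<in> space M" for x
    using g_range[OF that] by (auto simp: h_def max_def min_def abs_if)
  then show "(\<integral>x. \<bar>g x - h x\<bar> \<partial>M) \<le> (\<integral>x. \<bar>g x - real_cond_exp M F g x\<bar> \<partial>M)"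
    unfolding e_def[symmetric] using g_int h_int e(3) by (intro integral_mono) auto
qed

lemma prod_superset_le:
  fixes f :: "'i \<Rightarrow> real"
  assumes "finite T" "S \<subseteq> T" "\<And>j. j \<in> T \<Longrightarrow> 0 \<le> f j \<and> f j \<le> 1"
  shows "prod f T \<le> prod f S"
proof -
  have "prod f T = prod f (T - S) * prod f S" using assms by (simp add: prod.subset_diff)
  also have "\<dots> \<le> prod f S"
    using assms by (intro mult_left_le_one_le prod_le_1 prod_nonneg) auto
  finally show ?thesis .
qed

lemma limsup_less_reciprocal_minus_one:
  fixes \<psi> :: "nat \<Rightarrow> ereal" and \<mu> :: real
  assumes \<mu>: "0 \<le> \<mu>" "\<mu> < 1" and lim: "limsup \<psi> < 1 / ereal \<mu> - 1"
  obtains c where "0 < c" "(1 + c) * \<mu> < 1" "\<forall>\<^sub>F m in sequentially. \<psi> m < ereal c"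
proof -
  have margin: "0 < 1 / ereal \<mu> - 1 \<and> (\<forall>c. ereal c < 1 / ereal \<mu> - 1 \<longrightarrow> (1 + c) * \<mu> < 1)"
  proof (cases "\<mu> = 0")
    case False
    then have "1 / ereal \<mu> - 1 = ereal (1 / \<mu> - 1)"
      using \<mu> by (simp add: divide_ereal_def one_ereal_def inverse_eq_divide)
    then show ?thesis using \<mu> False by (simp add: field_simps)
  qed (simp add: divide_ereal_def)
  then have "max (limsup \<psi>) 0 < 1 / ereal \<mu> - 1" using lim by simp
  then obtain c where c: "max (limsup \<psi>) 0 < ereal c" "ereal c < 1 / ereal \<mu> - 1"
    using ereal_dense2 by blast
  show ?thesis
  proof
    show "0 < c" using c(1) by simp
    show "(1 + c) * \<mu> < 1" using margin c(2) by blast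
    show "\<forall>\<^sub>F m in sequentially. \<psi> m < ereal c" using c(1) by (intro Limsup_lessD) simp
  qed
qed

lemma power_le_const_mult_powr:
  fixes q \<delta> M b :: real
  assumes q: "0 \<le> q" "q < 1" and \<delta>: "0 < \<delta>" and M: "0 < M"
  obtains D where "0 < D" "\<And>x K. 1 \<le> x \<Longrightarrow> x powr \<delta> / M \<le> real K \<Longrightarrow> q ^ K \<le> D * x powr b"
proof -
  \<comment> \<open>\<open>q' > 0\<close> keeps \<open>ln q'\<close> meaningful.\<close>
  define q' where "q' = max q (1 / 2)"
  have q': "0 < q'" "q' < 1" "q \<le> q'" using q by (auto simp: q'_def)
  define a where "a = - ln q' / M"
  have a: "0 < a" using q' M by (simp add: a_def divide_neg_pos)
  define N where "N = nat \<lceil>- b / \<delta>\<rceil> + 1"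
  have "- b / \<delta> \<le> real N" unfolding N_def using real_nat_ceiling_ge[of "- b / \<delta>"] by linarith
  then have N: "1 \<le> N" "- (\<delta> * real N) \<le> b" using \<delta> by (auto simp: N_def field_simps)
  define D where "D = (real N / a) ^ N"
  show ?thesis
  proof
    show "0 < D" using a N by (simp add: D_def)
    fix x :: real and K :: nat assume x: "1 \<le> x" and K: "x powr \<delta> / M \<le> real K"
    define z where "z = a * x powr \<delta>"
    have z: "0 < z" using a x by (simp add: z_def)
    have "(z / N) ^ N \<le> (1 + z / N) ^ N" using z by (intro power_mono) auto
    also have "\<dots> \<le> exp z" using z N by (intro exp_ge_one_plus_x_over_n_power_n) auto
    finally have exp_z: "(z / N) ^ N \<le> exp z" .
    have "q ^ K \<le> q' ^ K" using q q' by (intro power_mono) auto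
    also have "\<dots> = exp (real K * ln q')" using q' by (simp add: exp_of_nat_mult)
    also have "\<dots> \<le> exp (- z)"
      using q' mult_right_mono_neg[OF K, of "ln q'"] by (simp add: z_def a_def mult.commute)
    also have "\<dots> \<le> 1 / (z / N) ^ N"
      using exp_z z N by (simp add: exp_minus inverse_eq_divide divide_left_mono)
    also have "\<dots> = D * x powr (- (\<delta> * real N))"
      using z x a N by (simp add: D_def z_def powr_minus powr_powr[symmetric] powr_realpow field_simps power_mult_distrib)
    also have "\<dots> \<le> D * x powr b"
      using a x N by (intro mult_left_mono powr_mono) (auto simp: D_def)
    finally show "q ^ K \<le> D * x powr b" .
  qed
qed

lemma obtain_block_count:
  fixes n L :: nat
  assumes n: "1 \<le> n" and L: "0 < L"
  obtains K where "K * L < n + L" "n \<le> K * L" "K \<le> n"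
proof
  define K where "K = Suc ((n - 1) div L)"
  have "(n - 1) div L * L + (n - 1) mod L = n - 1" by (rule div_mult_mod_eq)
  moreover have "(n - 1) mod L < L" using L by simp
  moreover have "(n - 1) div L \<le> n - 1" by (rule div_le_dividend)
  ultimately show "K * L < n + L" "n \<le> K * L" "K \<le> n" using n unfolding K_def mult_Suc by linarith+
qed

lemma powr_bound_of_block_bound:
  fixes e \<beta> :: "nat \<Rightarrow> real" and q C A \<epsilon> :: real and m :: nat
  assumes q: "0 \<le> q" "q < 1" and C: "0 \<le> C" and A: "0 \<le> A" and \<epsilon>: "0 < \<epsilon>" "\<epsilon> < 1"
    and block_bound: "\<And>n r K. 1 \<le> n \<Longrightarrow> 1 \<le> r \<Longrightarrow> K * (2 * r + m) < n + (2 * r + m) \<Longrightarrow>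
      e n \<le> q ^ K + real K * \<beta> r"
    and \<beta>: "\<And>r. 1 \<le> r \<Longrightarrow> \<beta> r \<le> C * real r powr (- A)"
  shows "\<exists>C\<epsilon>>0. \<forall>n::nat. n \<ge> 1 \<longrightarrow> e n \<le> C\<epsilon> * real n powr (1 - \<epsilon> * A)"
proof -
  obtain D where D: "0 < D" and decay: "\<And>x K. 1 \<le> x \<Longrightarrow> x powr (1 - \<epsilon>) / (real m + 4) \<le> real K \<Longrightarrow>
      q ^ K \<le> D * x powr (1 - \<epsilon> * A)"
    using power_le_const_mult_powr[OF q, of "1 - \<epsilon>" "real m + 4"] \<epsilon> by auto
  have "e n \<le> (D + C) * real n powr (1 - \<epsilon> * A)" if n: "1 \<le> n" for n
  proof -
    define x where "x = real n"
    have x: "1 \<le> x" "1 \<le> x powr \<epsilon>" using n \<epsilon> by (auto simp: x_def ge_one_powr_ge_zero)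
    define r where "r = nat \<lceil>x powr \<epsilon>\<rceil>"
    have r: "x powr \<epsilon> \<le> r" "r \<le> x powr \<epsilon> + 1" "1 \<le> r" using x(2) unfolding r_def by linarith+
    obtain K where K: "K * (2 * r + m) < n + (2 * r + m)" "n \<le> K * (2 * r + m)" "K \<le> n"
      using obtain_block_count[OF n, of "2 * r + m"] r(3) by auto
    have "x powr (1 - \<epsilon>) / (real m + 4) = x / ((real m + 4) * x powr \<epsilon>)"
      using x by (simp add: powr_diff)
    also have "\<dots> \<le> x / (2 * r + m)"
    proof (rule divide_left_mono)
      have "real m \<le> real m * x powr \<epsilon>" using x(2) by (simp add: mult_le_cancel_left1)
      then show "real (2 * r + m) \<le> (real m + 4) * x powr \<epsilon>" using r(2) x(2) by (simp add: algebra_simps)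
      show "0 < (real m + 4) * x powr \<epsilon> * real (2 * r + m)" using x(2) r(3) by (intro mult_pos_pos) auto
    qed (use x in simp)
    also have "\<dots> \<le> K" using K(2) r(3) by (simp add: x_def divide_le_eq flip: of_nat_mult of_nat_add)
    finally have first: "q ^ K \<le> D * x powr (1 - \<epsilon> * A)" by (rule decay[OF x(1)])
    have "real K * \<beta> r \<le> real K * (C * real r powr (- A))"
      using \<beta>[OF r(3)] by (rule mult_left_mono) simp
    also have "\<dots> \<le> x * (C * real r powr (- A))"
      using K(3) C by (intro mult_right_mono) (auto simp: x_def)
    also have "\<dots> \<le> x * (C * (x powr \<epsilon>) powr (- A))"
      using x r C A by (intro mult_left_mono powr_mono2') auto
    also have "\<dots> = C * x powr (1 - \<epsilon> * A)"
      using x by (simp add: powr_powr powr_diff powr_minus field_simps)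
    finally have second: "real K * \<beta> r \<le> C * x powr (1 - \<epsilon> * A)" .
    show ?thesis using block_bound[OF n r(3) K(1)] first second by (simp add: x_def distrib_right)
  qed
  then show ?thesis using D C by (intro exI[of _ "D + C"]) auto
qed

section \<open>Shift systems\<close>

definition coord_events :: "(int \<Rightarrow> 'a) measure \<Rightarrow> 'a measure \<Rightarrow> int set \<Rightarrow> (int \<Rightarrow> 'a) set set" where
  "coord_events P M0 J = (\<Union>j\<in>J. {{\<omega>\<in>space P. \<omega> j \<in> S} | S. S \<in> sets M0})"

definition coord_sigma :: "(int \<Rightarrow> 'a) measure \<Rightarrow> 'a measure \<Rightarrow> int set \<Rightarrow> (int \<Rightarrow> 'a) measure" where
  "coord_sigma P M0 J = sigma (space P) (coord_events P M0 J)"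

lemma coord_events_subset_Pow: "coord_events P M0 J \<subseteq> Pow (space P)"
  by (auto simp: coord_events_def)

lemma sets_coord_sigma: "sets (coord_sigma P M0 J) = coord_sets P M0 J"
  by (simp add: coord_sigma_def coord_sets_def coord_events_def[symmetric]
      sets_measure_of[OF coord_events_subset_Pow])

lemma space_coord_sigma [simp]: "space (coord_sigma P M0 J) = space P"
  by (simp add: coord_sigma_def space_measure_of[OF coord_events_subset_Pow])

lemma Fr_eq_coord_sigma: "Fr P M0 r = coord_sigma P M0 {- int r..int r}"
  by (simp add: Fr_def coord_sigma_def coord_events_def)

lemma coord_sigma_mono:
  assumes "J \<subseteq> J'"
  shows "subalgebra (coord_sigma P M0 J') (coord_sigma P M0 J)"
proof -
  have "coord_events P M0 J \<subseteq> coord_events P M0 J'" using assms by (auto simp: coord_events_def)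
  then show ?thesis
    unfolding subalgebra_def space_coord_sigma
    by (simp add: coord_sigma_def sets_measure_of[OF coord_events_subset_Pow] sigma_sets_subseteq)
qed

lemma shift_pow_apply: "(shift ^^ s) \<omega> j = \<omega> (j + int s)"
  by (induction s arbitrary: j) (auto simp: shift_def ac_simps)

locale shift_system = prob_space P for P :: "(int \<Rightarrow> 'a) measure" +
  fixes M0 :: "'a measure"
  assumes sets_P: "sets P = sets (Pi\<^sub>M UNIV (\<lambda>_::int. M0))"
    and stationary: "distr P P shift = P"
begin

lemma space_P_eq: "space P = {\<omega>. \<forall>j. \<omega> j \<in> space M0}"
  using sets_eq_imp_space_eq[OF sets_P] by (auto simp: space_PiM)

lemma shift_pow_in_space: "\<omega> \<in> space P \<Longrightarrow> (shift ^^ s) \<omega> \<in> space P"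
  by (simp add: space_P_eq shift_pow_apply)

lemma measurable_coord: "(\<lambda>\<omega>. \<omega> j) \<in> measurable P M0"
  using measurable_component_singleton[of j UNIV "\<lambda>_. M0"]
  by (simp add: measurable_cong_sets[OF sets_P refl])

lemma subalgebra_coord_sigma: "subalgebra P (coord_sigma P M0 J)"
proof -
  have "coord_events P M0 J \<subseteq> sets P"
  proof
    fix X assume "X \<in> coord_events P M0 J"
    then obtain j S where "S \<in> sets M0" "X = {\<omega>\<in>space P. \<omega> j \<in> S}"
      by (auto simp: coord_events_def)
    then show "X \<in> sets P"
      using measurable_sets[OF measurable_coord, of S j] by (simp add: vimage_def Int_def conj_commute)
  qed
  then show ?thesis
    unfolding subalgebra_def space_coord_sigma
    by (simp add: coord_sigma_def sets_measure_of[OF coord_events_subset_Pow] sigma_sets_le_sets_iff)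
qed

lemma measurable_from_coord_sigma: "f \<in> measurable (coord_sigma P M0 J) N \<Longrightarrow> f \<in> measurable P N"
  using measurable_from_subalg[OF subalgebra_coord_sigma] by blast

lemma measurable_shift_pow_coord_sigma:
  "shift ^^ s \<in> measurable (coord_sigma P M0 ((\<lambda>j. j + int s) ` J)) (coord_sigma P M0 J)"
  unfolding coord_sigma_def[of P M0 J]
proof (rule measurable_measure_of[OF coord_events_subset_Pow])
  show "shift ^^ s \<in> space (coord_sigma P M0 ((\<lambda>j. j + int s) ` J)) \<rightarrow> space P"
    using shift_pow_in_space by auto
  fix Y assume "Y \<in> coord_events P M0 J"
  then obtain j S where jS: "j \<in> J" "S \<in> sets M0" "Y = {\<omega>\<in>space P. \<omega> j \<in> S}"
    by (auto simp: coord_events_def)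
  then have "(shift ^^ s) -` Y \<inter> space (coord_sigma P M0 ((\<lambda>j. j + int s) ` J))
      \<in> coord_events P M0 ((\<lambda>j. j + int s) ` J)"
    using shift_pow_in_space by (auto simp: coord_events_def shift_pow_apply)
  then show "(shift ^^ s) -` Y \<inter> space (coord_sigma P M0 ((\<lambda>j. j + int s) ` J))
      \<in> sets (coord_sigma P M0 ((\<lambda>j. j + int s) ` J))"
    by (simp add: coord_sigma_def sets_measure_of[OF coord_events_subset_Pow])
qed

lemma measurable_shifted_window:
  assumes h: "h \<in> borel_measurable (coord_sigma P M0 {- int r..int r})"
    and window: "{int s - int r..int s + int r} \<subseteq> J"
  shows "(\<lambda>\<omega>. h ((shift ^^ s) \<omega>)) \<in> borel_measurable (coord_sigma P M0 J)"
proof -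
  have "(\<lambda>j. j + int s) ` {- int r..int r} = {int s - int r..int s + int r}"
    by (auto simp: image_iff intro!: bexI[of _ "x - int s" for x])
  then have "(\<lambda>\<omega>. h ((shift ^^ s) \<omega>)) \<in> borel_measurable (coord_sigma P M0 {int s - int r..int s + int r})"
    using measurable_compose[OF measurable_shift_pow_coord_sigma[of s] h] by (simp add: add.commute)
  then show ?thesis by (rule measurable_from_subalg[OF coord_sigma_mono[OF window]])
qed

lemma measurable_shift_pow: "shift ^^ s \<in> measurable P P"
proof -
  have "shift \<in> measurable P (Pi\<^sub>M UNIV (\<lambda>_::int. M0))"
    unfolding shift_def[abs_def]
    by (rule measurable_PiM_single') (auto simp: measurable_coord space_P_eq)
  then have "shift \<in> measurable P P" by (simp add: measurable_cong_sets[OF refl sets_P])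
  then show ?thesis by (induction s) (auto intro: measurable_compose)
qed

lemma integral_shift_pow:
  assumes f: "f \<in> borel_measurable P"
  shows "(\<integral>\<omega>. f ((shift ^^ s) \<omega>) \<partial>P) = (\<integral>\<omega>. (f \<omega> :: real) \<partial>P)"
proof (induction s)
  case (Suc s)
  have "(\<integral>\<omega>. f ((shift ^^ Suc s) \<omega>) \<partial>P) = (\<integral>\<omega>. f ((shift ^^ s) (shift \<omega>)) \<partial>P)"
    by (simp only: funpow_Suc_right o_def)
  also have "\<dots> = (\<integral>\<omega>. f ((shift ^^ s) \<omega>) \<partial>distr P P shift)"
    using f measurable_shift_pow[of 1] measurable_shift_pow[of s] by (subst integral_distr) auto
  finally show ?case using Suc stationary by simp
qed simp

lemma measure_inter_le_of_psiU:
  assumes psi: "psiU P M0 m < ereal c"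
    and A: "A \<in> coord_sets P M0 {0..int k}" and B: "B \<in> coord_sets P M0 {int k + int m..}"
  shows "measure P (A \<inter> B) \<le> (1 + c) * measure P A * measure P B"
proof -
  obtain c' where c': "c' < ereal c" and
    "\<forall>k::nat. \<forall>A \<in> coord_sets P M0 {0..int k}. \<forall>B \<in> coord_sets P M0 {int k + int m..}.
       ereal (measure P (A \<inter> B) - measure P A * measure P B) \<le> ereal (measure P A * measure P B) * c'"
    using psi unfolding psiU_def Inf_less_iff by blast
  then have "ereal (measure P (A \<inter> B) - measure P A * measure P B) \<le> ereal (measure P A * measure P B) * c'"
    using A B by blast
  also have "\<dots> \<le> ereal (measure P A * measure P B) * ereal c"
    using c' by (intro ereal_mult_left_mono) auto
  finally show ?thesis by (simp add: algebra_simps)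
qed

lemma integral_mult_le_of_psiU:
  assumes psi: "psiU P M0 m < ereal c" and c: "0 \<le> c"
    and f: "f \<in> borel_measurable (coord_sigma P M0 {0..int k})"
    and h: "h \<in> borel_measurable (coord_sigma P M0 {int k + int m..})"
    and f_range: "\<And>\<omega>. \<omega> \<in> space P \<Longrightarrow> 0 \<le> f \<omega> \<and> f \<omega> \<le> 1"
    and h_range: "\<And>\<omega>. \<omega> \<in> space P \<Longrightarrow> 0 \<le> h \<omega> \<and> h \<omega> \<le> 1"
  shows "(\<integral>\<omega>. f \<omega> * h \<omega> \<partial>P) \<le> (1 + c) * (\<integral>\<omega>. f \<omega> \<partial>P) * (\<integral>\<omega>. h \<omega> \<partial>P)"
  using subalgebra_coord_sigma subalgebra_coord_sigma _ _ f h f_range h_range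
  by (rule integral_mult_le_of_mixing)
    (use c measure_inter_le_of_psiU[OF psi] in \<open>auto simp: sets_coord_sigma\<close>)

lemma integral_block_prod_le:
  assumes h: "h \<in> borel_measurable (coord_sigma P M0 {- int r..int r})"
    and h_range: "\<And>\<omega>. 0 \<le> h \<omega> \<and> h \<omega> \<le> 1"
    and psi: "psiU P M0 m < ereal c" and c: "0 \<le> c"
  shows "(\<integral>\<omega>. (\<Prod>i<K. h ((shift ^^ (i * (2 * r + m) + r)) \<omega>)) \<partial>P)
    \<le> ((1 + c) * (\<integral>\<omega>. h \<omega> \<partial>P)) ^ K"
proof (induction K)
  case 0
  show ?case by (simp add: prob_space)
next
  case (Suc K)
  define L where "L = 2 * r + m"
  define \<Phi> where "\<Phi> = (\<lambda>\<omega>. \<Prod>i<K. h ((shift ^^ (i * L + r)) \<omega>))"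
  have h_P: "h \<in> borel_measurable P" using h by (rule measurable_from_coord_sigma)
  have \<Phi>_P: "\<Phi> \<in> borel_measurable P"
    unfolding \<Phi>_def using h_P measurable_shift_pow by measurable
  have \<Phi>_range: "0 \<le> \<Phi> \<omega> \<and> \<Phi> \<omega> \<le> 1" for \<omega>
    using h_range by (auto simp: \<Phi>_def intro!: prod_nonneg prod_le_1)
  have mean: "(\<integral>\<omega>. h ((shift ^^ s) \<omega>) \<partial>P) = (\<integral>\<omega>. h \<omega> \<partial>P)" for s
    by (rule integral_shift_pow[OF h_P])
  \<comment> \<open>The first factor depends on the coordinates \<open>0..2r\<close>, the others (\<open>\<Phi>\<close> shifted by \<open>L\<close>)
    only on coordinates \<open>\<ge> 2r + m\<close>, so \<open>\<psi>\<^sub>U(m)\<close> separates them.\<close>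
  have shift_block: "(shift ^^ (Suc i * L + r)) \<omega> = (shift ^^ (i * L + r)) ((shift ^^ L) \<omega>)" for i \<omega>
    by (simp add: fun_eq_iff shift_pow_apply algebra_simps)
  have split: "(\<Prod>i<Suc K. h ((shift ^^ (i * L + r)) \<omega>)) = h ((shift ^^ r) \<omega>) * \<Phi> ((shift ^^ L) \<omega>)" for \<omega>
    unfolding prod.lessThan_Suc_shift shift_block by (simp add: \<Phi>_def)
  have "(\<lambda>\<omega>. h ((shift ^^ r) \<omega>)) \<in> borel_measurable (coord_sigma P M0 {0..int (2 * r)})"
    by (rule measurable_shifted_window[OF h]) auto
  moreover have "(\<lambda>\<omega>. \<Phi> ((shift ^^ L) \<omega>)) \<in> borel_measurable (coord_sigma P M0 {int (2 * r) + int m..})"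
    unfolding \<Phi>_def shift_block[symmetric]
    by (intro borel_measurable_prod measurable_shifted_window[OF h]) (auto simp: L_def)
  ultimately have "(\<integral>\<omega>. h ((shift ^^ r) \<omega>) * \<Phi> ((shift ^^ L) \<omega>) \<partial>P)
      \<le> (1 + c) * (\<integral>\<omega>. h ((shift ^^ r) \<omega>) \<partial>P) * (\<integral>\<omega>. \<Phi> ((shift ^^ L) \<omega>) \<partial>P)"
    using h_range \<Phi>_range by (intro integral_mult_le_of_psiU[OF psi c])
  also have "\<dots> = (1 + c) * (\<integral>\<omega>. h \<omega> \<partial>P) * (\<integral>\<omega>. \<Phi> \<omega> \<partial>P)"
    by (simp add: mean integral_shift_pow[OF \<Phi>_P])
  also have "\<dots> \<le> (1 + c) * (\<integral>\<omega>. h \<omega> \<partial>P) * ((1 + c) * (\<integral>\<omega>. h \<omega> \<partial>P)) ^ K"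
    using Suc.IH c h_range by (intro mult_left_mono) (auto simp: \<Phi>_def L_def integral_nonneg)
  finally show ?case unfolding L_def[symmetric] split by (simp add: mult.assoc)
qed

lemma integrable_prod_shift_pow:
  fixes g :: "(int \<Rightarrow> 'a) \<Rightarrow> real"
  assumes g: "g \<in> borel_measurable P" and g_range: "\<And>\<omega>. \<omega> \<in> space P \<Longrightarrow> 0 \<le> g \<omega> \<and> g \<omega> \<le> 1"
  shows "integrable P (\<lambda>\<omega>. \<Prod>i\<in>I. g ((shift ^^ s i) \<omega>))"
proof (intro integrable_const_bound[where B=1] AE_I2)
  show "(\<lambda>\<omega>. \<Prod>i\<in>I. g ((shift ^^ s i) \<omega>)) \<in> borel_measurable P"
    using g measurable_shift_pow by measurable
  fix \<omega> assume "\<omega> \<in> space P"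
  then show "norm (\<Prod>i\<in>I. g ((shift ^^ s i) \<omega>)) \<le> 1"
    using g_range shift_pow_in_space by (auto simp: abs_prod intro!: prod_le_1)
qed

lemma integral_prod_shift_pow_le:
  fixes g h :: "(int \<Rightarrow> 'a) \<Rightarrow> real" and K :: nat
  assumes g: "g \<in> borel_measurable P" and h: "h \<in> borel_measurable P"
    and g_range: "\<And>\<omega>. \<omega> \<in> space P \<Longrightarrow> 0 \<le> g \<omega> \<and> g \<omega> \<le> 1"
    and h_range: "\<And>\<omega>. \<omega> \<in> space P \<Longrightarrow> 0 \<le> h \<omega> \<and> h \<omega> \<le> 1"
  shows "(\<integral>\<omega>. (\<Prod>i<K. g ((shift ^^ s i) \<omega>)) \<partial>P)
    \<le> (\<integral>\<omega>. (\<Prod>i<K. h ((shift ^^ s i) \<omega>)) \<partial>P) + real K * (\<integral>\<omega>. \<bar>g \<omega> - h \<omega>\<bar> \<partial>P)"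
proof -
  have dist_int: "integrable P (\<lambda>\<omega>. \<bar>g ((shift ^^ t) \<omega>) - h ((shift ^^ t) \<omega>)\<bar>)" for t
    using integrable_prod_shift_pow[OF g g_range, where I="{0}" and s="\<lambda>_. t"]
      integrable_prod_shift_pow[OF h h_range, where I="{0}" and s="\<lambda>_. t"]
    by (auto intro: integrable_abs Bochner_Integration.integrable_diff)
  have "(\<integral>\<omega>. (\<Prod>i<K. g ((shift ^^ s i) \<omega>)) \<partial>P)
      \<le> (\<integral>\<omega>. (\<Prod>i<K. h ((shift ^^ s i) \<omega>)) + (\<Sum>i<K. \<bar>g ((shift ^^ s i) \<omega>) - h ((shift ^^ s i) \<omega>)\<bar>) \<partial>P)"
  proof (rule integral_mono)
    fix \<omega> assume "\<omega> \<in> space P"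
    then have "\<bar>(\<Prod>i<K. g ((shift ^^ s i) \<omega>)) - (\<Prod>i<K. h ((shift ^^ s i) \<omega>))\<bar>
        \<le> (\<Sum>i<K. \<bar>g ((shift ^^ s i) \<omega>) - h ((shift ^^ s i) \<omega>)\<bar>)"
      using norm_prod_diff[of "{..<K}" "\<lambda>i. g ((shift ^^ s i) \<omega>)" "\<lambda>i. h ((shift ^^ s i) \<omega>)"]
        g_range h_range shift_pow_in_space by auto
    then show "(\<Prod>i<K. g ((shift ^^ s i) \<omega>))
        \<le> (\<Prod>i<K. h ((shift ^^ s i) \<omega>)) + (\<Sum>i<K. \<bar>g ((shift ^^ s i) \<omega>) - h ((shift ^^ s i) \<omega>)\<bar>)"
      by linarith
  qed (use integrable_prod_shift_pow[OF g g_range] integrable_prod_shift_pow[OF h h_range] dist_int in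
    \<open>auto intro!: Bochner_Integration.integrable_add Bochner_Integration.integrable_sum\<close>)
  also have "\<dots> = (\<integral>\<omega>. (\<Prod>i<K. h ((shift ^^ s i) \<omega>)) \<partial>P)
      + (\<Sum>i<K. \<integral>\<omega>. \<bar>g ((shift ^^ s i) \<omega>) - h ((shift ^^ s i) \<omega>)\<bar> \<partial>P)"
    using integrable_prod_shift_pow[OF h h_range] dist_int
    by (subst Bochner_Integration.integral_add) (auto simp: integral_sum)
  also have "\<dots> = (\<integral>\<omega>. (\<Prod>i<K. h ((shift ^^ s i) \<omega>)) \<partial>P) + real K * (\<integral>\<omega>. \<bar>g \<omega> - h \<omega>\<bar> \<partial>P)"
    using integral_shift_pow[of "\<lambda>\<omega>. \<bar>g \<omega> - h \<omega>\<bar>"] g h by simp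
  finally show ?thesis .
qed

lemma gprod_le_prod_subsample:
  fixes g :: "(int \<Rightarrow> 'a) \<Rightarrow> real"
  assumes g_range: "\<And>\<omega>. \<omega> \<in> space P \<Longrightarrow> 0 \<le> g \<omega> \<and> g \<omega> \<le> 1"
    and \<omega>: "\<omega> \<in> space P" and L: "0 < L" and K: "K * L < n + L"
  shows "gprod g n \<omega> \<le> (\<Prod>i<K. g ((shift ^^ (i * L)) \<omega>))"
proof -
  have "i * L < n" if "i < K" for i
  proof -
    have "i * L + L \<le> K * L" using that by (metis add.commute mult_Suc mult_le_mono1 Suc_leI)
    then show ?thesis using K by linarith
  qed
  then have "(\<lambda>i. i * L) ` {..<K} \<subseteq> {..<n}" by auto
  then have "gprod g n \<omega> \<le> (\<Prod>j\<in>(\<lambda>i. i * L) ` {..<K}. g ((shift ^^ j) \<omega>))"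
    unfolding gprod_def using g_range shift_pow_in_space[OF \<omega>] by (intro prod_superset_le) auto
  also have "\<dots> = (\<Prod>i<K. g ((shift ^^ (i * L)) \<omega>))"
    using L by (subst prod.reindex) (auto simp: inj_on_def)
  finally show ?thesis .
qed

lemma integral_gprod_le:
  fixes K :: nat
  assumes g: "g \<in> borel_measurable P"
    and g_range: "\<And>\<omega>. \<omega> \<in> space P \<Longrightarrow> 0 \<le> g \<omega> \<and> g \<omega> \<le> 1"
    and psi: "psiU P M0 m < ereal c" and c: "0 \<le> c" and r: "1 \<le> r"
    and K: "K * (2 * r + m) < n + (2 * r + m)"
  shows "(\<integral>\<omega>. gprod g n \<omega> \<partial>P) \<le> ((1 + c) * (\<integral>\<omega>. g \<omega> \<partial>P)) ^ K + real K * beta1 P M0 g r"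
proof -
  define L where "L = 2 * r + m"
  obtain h where h: "h \<in> borel_measurable (coord_sigma P M0 {- int r..int r})"
    and h_range: "\<And>\<omega>. 0 \<le> h \<omega> \<and> h \<omega> \<le> 1" and h_mean: "(\<integral>\<omega>. h \<omega> \<partial>P) = (\<integral>\<omega>. g \<omega> \<partial>P)"
    and h_dist: "(\<integral>\<omega>. \<bar>g \<omega> - h \<omega>\<bar> \<partial>P) \<le> beta1 P M0 g r"
    using clipped_real_cond_exp[OF subalgebra_coord_sigma g g_range]
    unfolding beta1_def Fr_eq_coord_sigma by blast
  have h_P: "h \<in> borel_measurable P" using h by (rule measurable_from_coord_sigma)
  have "(\<integral>\<omega>. gprod g n \<omega> \<partial>P) \<le> (\<integral>\<omega>. (\<Prod>i<K. g ((shift ^^ (i * L)) \<omega>)) \<partial>P)"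
  proof (rule integral_mono)
    show "integrable P (gprod g n)"
      using integrable_prod_shift_pow[OF g g_range, where I="{..<n}" and s=id] by (simp add: gprod_def[abs_def])
    fix \<omega> assume \<omega>: "\<omega> \<in> space P"
    show "gprod g n \<omega> \<le> (\<Prod>i<K. g ((shift ^^ (i * L)) \<omega>))"
      by (rule gprod_le_prod_subsample[where g=g, OF g_range \<omega>]) (use r K in \<open>auto simp: L_def\<close>)
  qed (rule integrable_prod_shift_pow[OF g g_range])
  also have "\<dots> = (\<integral>\<omega>. (\<Prod>i<K. g ((shift ^^ (i * L + r)) \<omega>)) \<partial>P)"
    using integral_shift_pow[of "\<lambda>\<omega>. \<Prod>i<K. g ((shift ^^ (i * L)) \<omega>)" r]
      g measurable_shift_pow by (simp add: funpow_add)
  also have "\<dots> \<le> (\<integral>\<omega>. (\<Prod>i<K. h ((shift ^^ (i * L + r)) \<omega>)) \<partial>P) + real K * (\<integral>\<omega>. \<bar>g \<omega> - h \<omega>\<bar> \<partial>P)"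
    using h_range by (intro integral_prod_shift_pow_le g h_P g_range) auto
  also have "\<dots> \<le> ((1 + c) * (\<integral>\<omega>. g \<omega> \<partial>P)) ^ K + real K * beta1 P M0 g r"
    using integral_block_prod_le[OF h h_range psi c, of K] h_mean h_dist
    by (intro add_mono mult_left_mono) (auto simp: L_def)
  finally show ?thesis .
qed

end

theorem lemma3p5:
  fixes P :: "(int \<Rightarrow> 'a) measure" and M0 :: "'a measure"
    and g :: "(int \<Rightarrow> 'a) \<Rightarrow> real" and C A :: real
  assumes prob: "prob_space P"
    and sets_P: "sets P = sets (Pi\<^sub>M UNIV (\<lambda>_::int. M0))"
    and stationary: "distr P P shift = P"
    and g_meas: "g \<in> borel_measurable P"
    and g_range: "\<And>\<omega>. \<omega> \<in> space P \<Longrightarrow> 0 \<le> g \<omega> \<and> g \<omega> \<le> 1"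
    and Eg: "(\<integral>\<omega>. g \<omega> \<partial>P) < 1"
    and psi: "limsup (psiU P M0) < 1 / ereal (\<integral>\<omega>. g \<omega> \<partial>P) - 1"
    and C_pos: "C > 0" and A_gt: "A > 1"
    and beta: "\<And>r::nat. r \<ge> 1 \<Longrightarrow> beta1 P M0 g r \<le> C * real r powr (- A)"
  shows "\<forall>\<epsilon>::real. 0 < \<epsilon> \<and> \<epsilon> < 1 \<longrightarrow>
           (\<exists>C\<epsilon>>0. \<forall>n::nat. n \<ge> 1 \<longrightarrow>
              (\<integral>\<omega>. gprod g n \<omega> \<partial>P) \<le> C\<epsilon> * real n powr (1 - \<epsilon> * A))"
proof (intro allI impI)
  fix \<epsilon> :: real assume \<epsilon>: "0 < \<epsilon> \<and> \<epsilon> < 1"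
  interpret shift_system P M0
    using prob sets_P stationary by (simp add: shift_system_def shift_system_axioms_def)
  have mean: "0 \<le> (\<integral>\<omega>. g \<omega> \<partial>P)" using g_range by (simp add: integral_nonneg)
  obtain c where c: "0 < c" "(1 + c) * (\<integral>\<omega>. g \<omega> \<partial>P) < 1"
    and "\<forall>\<^sub>F m in sequentially. psiU P M0 m < ereal c"
    using limsup_less_reciprocal_minus_one[OF mean Eg psi] by blast
  then obtain m where psi_m: "psiU P M0 m < ereal c" by (auto simp: eventually_sequentially)
  show "\<exists>C\<epsilon>>0. \<forall>n::nat. n \<ge> 1 \<longrightarrow> (\<integral>\<omega>. gprod g n \<omega> \<partial>P) \<le> C\<epsilon> * real n powr (1 - \<epsilon> * A)"
  proof (rule powr_bound_of_block_bound[where m = m and C = C and \<beta> = "beta1 P M0 g"])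
    fix n r K :: nat assume "1 \<le> r" "K * (2 * r + m) < n + (2 * r + m)"
    then show "(\<integral>\<omega>. gprod g n \<omega> \<partial>P) \<le> ((1 + c) * (\<integral>\<omega>. g \<omega> \<partial>P)) ^ K + real K * beta1 P M0 g r"
      using c by (intro integral_gprod_le[OF g_meas g_range psi_m]) auto
  qed (use c mean C_pos A_gt \<epsilon> beta in auto)
qed

end
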